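(* For any digraph $G$, $1+\mathrm{cr}(G)\ge\mathrm{lifo}_{\mathtt{mi}}(G)$.
   Context: All digraphs are finite, simple, without self-loops and have at least one vertex (induced subgraphs appearing as game data may be empty). For a finite set $V$, $V^*$ is the set of finite words over $V$, $\epsilon$ the empty word; $X \preceq Y$ means $X$ is a prefix of $Y$; for $X=a_1\cdots a_n$, $|X|=n$ and $\mathrm{let}(X)=\{a_1,\dots,a_n\}$. $A\Delta B$ is symmetric difference. For $X\subseteq V(G)$, $G\setminus X$ is the subgraph induced by $V(G)\setminus X$. Induced subgraphs are identified with their vertex sets. A subgraph $H\subseteq G$ is successor-closed if there is no edge of $G$ from $H$ to $G\setminus H$. Cycle-rank $\mathrm{cr}(G)$: $0$ if $G$ is acyclic; $1+\min_{v\in V(G)}\mathrm{cr}(G\setminus\{v\})$ if $G$ is strongly connected (and not acyclic); otherwise the maximum of $\mathrm{cr}(H)$ over strongly connected components $H$ of $G$. A position is a pair $(X,R)$ with $X\in V(G)^*$ and $R$ a (possibly empty) induced subgraph of $G\setminus\mathrm{let}(X)$; it is an $\mathtt{i}$-position if $R$ is successor-closed. An $\mathtt{i}$-position $(X',R')$ is an $\mathtt{i}$-successor of $(X,R)$ if ($X\preceq X'$ or $X'\preceq X$), $|\mathrm{let}(X)\Delta\mathrm{let}(X')|=1$, and every $v'\in R'$ is reachable by a directed path in $G\setminus(\mathrm{let}(X)\cap\mathrm{let}(X'))$ from some $v\in R$. An $\mathtt{i}$-search from $(X_0,R_0)$ is a finite or infinite sequence of $\mathtt{i}$-positions with each $(X_{i+1},R_{i+1})$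 an $\mathtt{i}$-successor of $(X_i,R_i)$; it is complete if it is infinite or $R_n=\emptyset$ for some $n$, and a complete search is winning for the searchers if $R_n=\emptyset$ for some $n$. A complete search from $(\epsilon,G)$ is monotone if $R_{i+1}\subseteq R_i$ for all $i$, and uses at most $k$ searchers if $|X_i|\le k$ for all $i$. An $\mathtt{i}$-strategy is a function $\sigma$ from $\mathtt{i}$-positions to $V(G)^*$ such that $\sigma(X,R)$ is the first component of some $\mathtt{i}$-successor of $(X,R)$; a search is consistent with $\sigma$ if $X_{i+1}=\sigma(X_i,R_i)$ for all $i$. $\sigma$ is winning if every complete consistent search from $(\epsilon,G)$ is winning for the searchers; it is monotone / uses at most $k$ searchers if every complete consistent search from $(\epsilon,G)$ has that property. $\mathrm{lifo}_{\mathtt{mi}}(G)$ is the minimum $k$ such that there is a monotone winning $\mathtt{i}$-strategy using at most $k$ searchers. *)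

theory Defs
  imports Main "HOL-Library.Extended_Nat" "HOL-Library.Sublist"
begin

(* A digraph is given by a vertex set V and an edge relation E.
   Induced subgraphs are identified with vertex sets S; the edges of G[S] are ind E S. *)

definition ind :: "('a \<times> 'a) set \<Rightarrow> 'a set \<Rightarrow> ('a \<times> 'a) set" where
  "ind E S = E \<inter> (S \<times> S)"

definition digraph :: "'a set \<Rightarrow> ('a \<times> 'a) set \<Rightarrow> bool" where
  "digraph V E \<longleftrightarrow> finite V \<and> V \<noteq> {} \<and> E \<subseteq> V \<times> V \<and> (\<forall>v. (v, v) \<notin> E)"

definition acyclic_on :: "('a \<times> 'a) set \<Rightarrow> 'a set \<Rightarrow> bool" where
  "acyclic_on E S \<longleftrightarrow> acyclic (ind E S)"

definition strongly_connected :: "('a \<times> 'a) set \<Rightarrow> 'a set \<Rightarrow> bool" where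
  "strongly_connected E S \<longleftrightarrow> S \<noteq> {} \<and> (\<forall>x\<in>S. \<forall>y\<in>S. (x, y) \<in> (ind E S)\<^sup>*)"

definition scc :: "('a \<times> 'a) set \<Rightarrow> 'a set \<Rightarrow> 'a set \<Rightarrow> bool" where
  "scc E S H \<longleftrightarrow> H \<subseteq> S \<and> H \<noteq> {}
     \<and> (\<forall>x\<in>H. \<forall>y\<in>H. (x, y) \<in> (ind E S)\<^sup>*)
     \<and> (\<forall>x\<in>H. \<forall>y\<in>S. (x, y) \<in> (ind E S)\<^sup>* \<and> (y, x) \<in> (ind E S)\<^sup>* \<longrightarrow> y \<in> H)"

function cr :: "('a \<times> 'a) set \<Rightarrow> 'a set \<Rightarrow> nat" where
  "cr E S = (if \<not> finite S \<or> acyclic_on E S then 0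
     else if strongly_connected E S then 1 + Min ((\<lambda>v. cr E (S - {v})) ` S)
     else Max ((\<lambda>H. cr E H) ` {H. scc E S H}))"
  by auto
termination
proof (relation "measure (\<lambda>(E, S). card S)")
  show "wf (measure (\<lambda>(E, S). card S))" by simp
next
  fix E :: "('a \<times> 'a) set" and S v
  assume that: "\<not> (\<not> finite S \<or> acyclic_on E S)" "v \<in> S"
  show "((E, S - {v}), (E, S)) \<in> measure (\<lambda>(E, S). card S)"
  proof -
    have "card S > 0" using that by (auto simp: card_gt_0_iff)
    then show ?thesis using that by (simp add: card_Diff1_less)
  qed
next
  fix E :: "('a \<times> 'a) set" and S H
  assume a: "\<not> (\<not> finite S \<or> acyclic_on E S)" "\<not> strongly_connected E S"
    "H \<in> {H. scc E S H}"
  then have "H \<subseteq> S" "H \<noteq> S" unfolding scc_def strongly_connected_def by auto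
  then have "card H < card S" using a(1) by (simp add: psubset_card_mono)
  then show "((E, H), (E, S)) \<in> measure (\<lambda>(E, S). card S)" by simp
qed

type_synonym 'a pos = "'a list \<times> 'a set"

definition ipos :: "'a set \<Rightarrow> ('a \<times> 'a) set \<Rightarrow> 'a pos \<Rightarrow> bool" where
  "ipos V E p \<longleftrightarrow> set (fst p) \<subseteq> V \<and> snd p \<subseteq> V - set (fst p)
     \<and> (\<forall>u\<in>snd p. \<forall>w\<in>V - set (fst p). (u, w) \<in> E \<longrightarrow> w \<in> snd p)"

definition isucc :: "'a set \<Rightarrow> ('a \<times> 'a) set \<Rightarrow> 'a pos \<Rightarrow> 'a pos \<Rightarrow> bool" where
  "isucc V E p p' \<longleftrightarrow> ipos V E p' \<and>
     (prefix (fst p) (fst p') \<or> prefix (fst p') (fst p)) \<and>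
     card ((set (fst p) - set (fst p')) \<union> (set (fst p') - set (fst p))) = 1 \<and>
     (\<forall>v'\<in>snd p'. \<exists>v\<in>snd p.
        (v, v') \<in> (ind E (V - (set (fst p) \<inter> set (fst p'))))\<^sup>*)"

(* A (finite or infinite) sequence: s with valid indices i < len; len = \<infinity> for infinite ones *)
definition isearch :: "'a set \<Rightarrow> ('a \<times> 'a) set \<Rightarrow> 'a pos \<Rightarrow> (nat \<Rightarrow> 'a pos) \<Rightarrow> enat \<Rightarrow> bool" where
  "isearch V E p0 s len \<longleftrightarrow> 0 < len \<and> s 0 = p0 \<and>
     (\<forall>i. enat i < len \<longrightarrow> ipos V E (s i)) \<and>
     (\<forall>i. enat (Suc i) < len \<longrightarrow> isucc V E (s i) (s (Suc i)))"

definition complete_search :: "(nat \<Rightarrow> 'a pos) \<Rightarrow> enat \<Rightarrow> bool" where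
  "complete_search s len \<longleftrightarrow> len = \<infinity> \<or> (\<exists>n. enat n < len \<and> snd (s n) = {})"

definition winning_search :: "(nat \<Rightarrow> 'a pos) \<Rightarrow> enat \<Rightarrow> bool" where
  "winning_search s len \<longleftrightarrow> (\<exists>n. enat n < len \<and> snd (s n) = {})"

definition monotone_search :: "(nat \<Rightarrow> 'a pos) \<Rightarrow> enat \<Rightarrow> bool" where
  "monotone_search s len \<longleftrightarrow> (\<forall>i. enat (Suc i) < len \<longrightarrow> snd (s (Suc i)) \<subseteq> snd (s i))"

definition search_uses_at_most :: "nat \<Rightarrow> (nat \<Rightarrow> 'a pos) \<Rightarrow> enat \<Rightarrow> bool" where
  "search_uses_at_most k s len \<longleftrightarrow> (\<forall>i. enat i < len \<longrightarrow> length (fst (s i)) \<le> k)"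

definition istrategy :: "'a set \<Rightarrow> ('a \<times> 'a) set \<Rightarrow> ('a pos \<Rightarrow> 'a list) \<Rightarrow> bool" where
  "istrategy V E \<sigma> \<longleftrightarrow> (\<forall>p. ipos V E p \<longrightarrow> (\<exists>p'. isucc V E p p' \<and> fst p' = \<sigma> p))"

definition consistent :: "('a pos \<Rightarrow> 'a list) \<Rightarrow> (nat \<Rightarrow> 'a pos) \<Rightarrow> enat \<Rightarrow> bool" where
  "consistent \<sigma> s len \<longleftrightarrow> (\<forall>i. enat (Suc i) < len \<longrightarrow> fst (s (Suc i)) = \<sigma> (s i))"

definition cc_search :: "'a set \<Rightarrow> ('a \<times> 'a) set \<Rightarrow> ('a pos \<Rightarrow> 'a list) \<Rightarrow> (nat \<Rightarrow> 'a pos) \<Rightarrow> enat \<Rightarrow> bool" where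
  "cc_search V E \<sigma> s len \<longleftrightarrow> isearch V E ([], V) s len \<and> complete_search s len \<and> consistent \<sigma> s len"

definition mi_winning_strategy :: "'a set \<Rightarrow> ('a \<times> 'a) set \<Rightarrow> nat \<Rightarrow> ('a pos \<Rightarrow> 'a list) \<Rightarrow> bool" where
  "mi_winning_strategy V E k \<sigma> \<longleftrightarrow> istrategy V E \<sigma> \<and>
     (\<forall>s len. cc_search V E \<sigma> s len \<longrightarrow>
        winning_search s len \<and> monotone_search s len \<and> search_uses_at_most k s len)"

definition lifo_mi :: "'a set \<Rightarrow> ('a \<times> 'a) set \<Rightarrow> nat" where
  "lifo_mi V E = (LEAST k. \<exists>\<sigma>. mi_winning_strategy V E k \<sigma>)"

end

theory Submission
  imports Defs
begin

text \<open>
  The searchers form a stack x1 ... xn along a nested decomposition of G: the arena A0 is G, and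
  A(i+1) is the strongly connected component of x(i+1) in A(i) with x(i+1) removed. The next
  searcher goes on a vertex of a source component C of the robber region inside the current arena,
  chosen so that its removal minimises the cycle rank; hence cr A(i+1) < cr C \<le> cr A(i) as long as
  A(i+1) is nonempty, and at most 1 + cr G searchers are ever used. Because each stacked component
  is a source component, the robber region enters it only from inside; so once the region has left
  the top arena, lifting the top searcher cannot let it grow, and the search is monotone. Each
  placement shrinks the region and each removal shrinks the stack, so the region becomes empty.
\<close>

declare cr.simps[simp del]

definition scc_of :: "('a \<times> 'a) set \<Rightarrow> 'a set \<Rightarrow> 'a \<Rightarrow> 'a set" where
  "scc_of E W x = {y\<in>W. (x, y) \<in> (ind E W)\<^sup>* \<and> (y, x) \<in> (ind E W)\<^sup>*}"

lemma scc_of_subset: "scc_of E W x \<subseteq> W"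
  unfolding scc_of_def by auto

lemma self_in_scc_of: "x \<in> W \<Longrightarrow> x \<in> scc_of E W x"
  unfolding scc_of_def by auto

lemma scc_of_eq: "y \<in> scc_of E W x \<Longrightarrow> scc_of E W y = scc_of E W x"
  unfolding scc_of_def by (auto intro: rtrancl_trans)

lemma scc_scc_of: "x \<in> W \<Longrightarrow> scc E W (scc_of E W x)"
  unfolding scc_def scc_of_def by (auto intro: rtrancl_trans)

lemma ind_mono: "A \<subseteq> B \<Longrightarrow> ind E A \<subseteq> ind E B"
  unfolding ind_def by auto

lemma rtrancl_ind_scc_of:
  assumes "(x, y) \<in> (ind E W)\<^sup>*"
  shows "(y, c) \<in> (ind E W)\<^sup>* \<Longrightarrow> (c, x) \<in> (ind E W)\<^sup>* \<Longrightarrow> (x, y) \<in> (ind E (scc_of E W c))\<^sup>*"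
  using assms
proof (induction rule: converse_rtrancl_induct)
  case base
  then show ?case by simp
next
  case (step x z)
  have zc: "(z, c) \<in> (ind E W)\<^sup>*" and cz: "(c, z) \<in> (ind E W)\<^sup>*"
    using step by (meson rtrancl_trans rtrancl_into_rtrancl)+
  have xc: "(x, c) \<in> (ind E W)\<^sup>*"
    using step(1) zc by (meson converse_rtrancl_into_rtrancl)
  have "(x, z) \<in> ind E (scc_of E W c)"
    using step(1,5) zc cz xc unfolding ind_def scc_of_def by auto
  moreover have "(z, y) \<in> (ind E (scc_of E W c))\<^sup>*"
    using step cz by blast
  ultimately show ?case by (meson converse_rtrancl_into_rtrancl)
qed

lemma strongly_connected_scc_of: "c \<in> W \<Longrightarrow> strongly_connected E (scc_of E W c)"
  unfolding strongly_connected_def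
proof (intro conjI ballI)
  show "c \<in> W \<Longrightarrow> scc_of E W c \<noteq> {}" using self_in_scc_of by fast
next
  fix x y assume "x \<in> scc_of E W c" "y \<in> scc_of E W c"
  then show "(x, y) \<in> (ind E (scc_of E W c))\<^sup>*"
    by (intro rtrancl_ind_scc_of) (auto simp: scc_of_def intro: rtrancl_trans)
qed

lemma cr_scc_le:
  assumes "finite S" "scc E S H"
  shows "cr E H \<le> cr E S"
proof -
  have HS: "H \<subseteq> S" using assms(2) unfolding scc_def by auto
  consider "acyclic_on E S" | "\<not> acyclic_on E S" "strongly_connected E S"
    | "\<not> acyclic_on E S" "\<not> strongly_connected E S" by blast
  then show ?thesis
  proof cases
    case 1
    then have "acyclic_on E H"
      unfolding acyclic_on_def using acyclic_subset ind_mono[OF HS] by blast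
    then show ?thesis by (simp add: cr.simps[of E H])
  next
    case 2
    then have "H = S"
      using assms(2) HS unfolding strongly_connected_def scc_def by blast
    then show ?thesis by simp
  next
    case 3
    have "finite {H. scc E S H}"
      by (rule finite_subset[of _ "Pow S"]) (auto simp: scc_def assms(1))
    then show ?thesis
      using 3 assms by (simp add: cr.simps[of E S])
  qed
qed

lemma strongly_connected_not_acyclic:
  assumes "strongly_connected E C" "x \<in> C" "y \<in> C" "x \<noteq> y"
  shows "\<not> acyclic_on E C"
proof -
  have "(x, y) \<in> (ind E C)\<^sup>+" "(y, x) \<in> (ind E C)\<^sup>+"
    using assms unfolding strongly_connected_def by (auto simp: rtrancl_eq_or_trancl)
  then have "(x, x) \<in> (ind E C)\<^sup>+" by auto
  then show ?thesis unfolding acyclic_on_def acyclic_def by auto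
qed

lemma cr_Diff_argmin_less:
  assumes "finite C" "strongly_connected E C" "x \<in> C" "C - {x} \<noteq> {}"
    and "\<forall>v\<in>C. cr E (C - {x}) \<le> cr E (C - {v})"
  shows "cr E (C - {x}) < cr E C"
proof -
  obtain y where "y \<in> C" "y \<noteq> x" using assms(4) by auto
  then have "\<not> acyclic_on E C"
    using assms(2,3) strongly_connected_not_acyclic by metis
  moreover have "Min ((\<lambda>v. cr E (C - {v})) ` C) = cr E (C - {x})"
    using assms(1,3,5) by (intro Min_eqI) auto
  ultimately show ?thesis using assms(1,2) by (simp add: cr.simps[of E C])
qed

definition source_of :: "('a \<times> 'a) set \<Rightarrow> 'a set \<Rightarrow> 'a" where
  "source_of r S = arg_min_on (\<lambda>c. card {y\<in>S. (y, c) \<in> r\<^sup>*}) S"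

lemma source_of_in: "finite S \<Longrightarrow> S \<noteq> {} \<Longrightarrow> source_of r S \<in> S"
  unfolding source_of_def by (rule arg_min_if_finite)

lemma source_of_reaches:
  assumes fin: "finite S" and y: "y \<in> S" "(y, source_of r S) \<in> r\<^sup>*"
  shows "(source_of r S, y) \<in> r\<^sup>*"
proof (rule ccontr)
  let ?c = "source_of r S"
  define preds where "preds c = {z\<in>S. (z, c) \<in> r\<^sup>*}" for c
  assume "(?c, y) \<notin> r\<^sup>*"
  then have "preds y \<subset> preds ?c"
    using y source_of_in[OF fin, of r] unfolding preds_def by (auto intro: rtrancl_trans)
  then have "card (preds y) < card (preds ?c)"
    using fin unfolding preds_def by (intro psubset_card_mono) auto
  moreover have "card (preds ?c) \<le> card (preds y)"
    using fin y(1) unfolding preds_def source_of_def by (intro arg_min_least) auto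
  ultimately show False by simp
qed

definition pivot :: "('a \<times> 'a) set \<Rightarrow> 'a set \<Rightarrow> 'a set \<Rightarrow> 'a" where
  "pivot E W R = (let C = scc_of E W (source_of (ind E W) (R \<inter> W))
     in arg_min_on (\<lambda>v. cr E (C - {v})) C)"

context
  fixes E :: "('a \<times> 'a) set" and W R :: "'a set"
  assumes fin: "finite W" and meets: "R \<inter> W \<noteq> {}"
begin

private abbreviation "c \<equiv> source_of (ind E W) (R \<inter> W)"
private abbreviation "C \<equiv> scc_of E W c"

private lemma source_in: "c \<in> R \<inter> W"
  using fin meets by (intro source_of_in) auto

private lemma finite_C: "finite C"
  using fin scc_of_subset finite_subset by metis

lemma pivot_in_scc: "pivot E W R \<in> scc_of E W (source_of (ind E W) (R \<inter> W))"
proof -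
  have "C \<noteq> {}" using self_in_scc_of source_in by fast
  then show ?thesis unfolding pivot_def Let_def by (rule arg_min_if_finite[OF finite_C])
qed

lemma scc_of_pivot: "scc_of E W (pivot E W R) = scc_of E W (source_of (ind E W) (R \<inter> W))"
  using pivot_in_scc by (rule scc_of_eq)

lemma pivot_in_region:
  assumes closed: "ind E W `` R \<subseteq> R"
  shows "pivot E W R \<in> R"
proof -
  have "(c, pivot E W R) \<in> (ind E W)\<^sup>*" using pivot_in_scc unfolding scc_of_def by auto
  then have "pivot E W R \<in> (ind E W)\<^sup>* `` R" using source_in by auto
  then show ?thesis using Image_closed_trancl[OF closed] by simp
qed

lemma cr_scc_of_pivot_Diff_less:
  defines "x \<equiv> pivot E W R"
  assumes "scc_of E W x - {x} \<noteq> {}"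
  shows "cr E (scc_of E W x - {x}) < cr E (scc_of E W x)"
  unfolding x_def scc_of_pivot
proof (rule cr_Diff_argmin_less[OF finite_C])
  show "strongly_connected E C" using source_in by (simp add: strongly_connected_scc_of)
  show "pivot E W R \<in> C" by (rule pivot_in_scc)
  show "C - {pivot E W R} \<noteq> {}" using assms(2) unfolding x_def scc_of_pivot .
  show "\<forall>v\<in>C. cr E (C - {pivot E W R}) \<le> cr E (C - {v})"
  proof
    fix v assume v: "v \<in> C"
    then show "cr E (C - {pivot E W R}) \<le> cr E (C - {v})"
      using arg_min_least[OF finite_C _ v, of "\<lambda>v. cr E (C - {v})"]
      unfolding pivot_def Let_def by blast
  qed
qed

lemma scc_of_pivot_entry:
  assumes "u \<in> R \<inter> W" "(u, d) \<in> ind E W" "d \<in> scc_of E W (pivot E W R)"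
  shows "u \<in> scc_of E W (pivot E W R)"
proof -
  have "(d, c) \<in> (ind E W)\<^sup>*"
    using assms(3) unfolding scc_of_pivot by (simp add: scc_of_def)
  then have "(u, c) \<in> (ind E W)\<^sup>*"
    using assms(2) by (simp add: converse_rtrancl_into_rtrancl)
  moreover have "(c, u) \<in> (ind E W)\<^sup>*"
    using source_of_reaches[OF _ assms(1) calculation] fin by simp
  ultimately show ?thesis
    using assms(1) unfolding scc_of_pivot by (simp add: scc_of_def)
qed

end

fun arena :: "('a \<times> 'a) set \<Rightarrow> 'a set \<Rightarrow> 'a list \<Rightarrow> 'a set" where
  "arena E W [] = W"
| "arena E W (x # xs) = arena E (scc_of E W x - {x}) xs"

fun rank_decreasing :: "('a \<times> 'a) set \<Rightarrow> 'a set \<Rightarrow> 'a list \<Rightarrow> bool" where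
  "rank_decreasing E W [] = True"
| "rank_decreasing E W (x # xs) \<longleftrightarrow> x \<in> W
     \<and> (scc_of E W x - {x} \<noteq> {} \<longrightarrow> cr E (scc_of E W x - {x}) < cr E (scc_of E W x))
     \<and> rank_decreasing E (scc_of E W x - {x}) xs"

fun sealed :: "('a \<times> 'a) set \<Rightarrow> 'a set \<Rightarrow> 'a list \<Rightarrow> 'a set \<Rightarrow> bool" where
  "sealed E W [] R = True"
| "sealed E W (x # xs) R \<longleftrightarrow> (\<forall>u\<in>R. \<forall>d\<in>scc_of E W x. (u, d) \<in> E \<longrightarrow> u \<in> scc_of E W x)
     \<and> sealed E (scc_of E W x - {x}) xs R"

lemma arena_snoc: "arena E W (xs @ [x]) = scc_of E (arena E W xs) x - {x}"
  by (induction xs arbitrary: W) auto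

lemma rank_decreasing_snoc:
  "rank_decreasing E W (xs @ [x]) \<longleftrightarrow> rank_decreasing E W xs \<and> x \<in> arena E W xs
     \<and> (arena E W (xs @ [x]) \<noteq> {} \<longrightarrow> cr E (arena E W (xs @ [x])) < cr E (scc_of E (arena E W xs) x))"
  by (induction xs arbitrary: W) auto

lemma sealed_snoc:
  "sealed E W (xs @ [x]) R \<longleftrightarrow> sealed E W xs R
     \<and> (\<forall>u\<in>R. \<forall>d\<in>scc_of E (arena E W xs) x. (u, d) \<in> E \<longrightarrow> u \<in> scc_of E (arena E W xs) x)"
  by (induction xs arbitrary: W) auto

lemma sealed_mono: "sealed E W xs R \<Longrightarrow> R' \<subseteq> R \<Longrightarrow> sealed E W xs R'"
  by (induction xs arbitrary: W) auto

lemma arena_subset: "arena E W xs \<subseteq> W - set xs"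
proof (induction xs arbitrary: W)
  case (Cons x xs)
  then show ?case using scc_of_subset[of E W x] by force
qed simp

lemma length_le_cr_if_rank_decreasing:
  "finite W \<Longrightarrow> rank_decreasing E W xs \<Longrightarrow> length xs \<le> 1 + cr E W"
proof (induction xs arbitrary: W)
  case Nil
  then show ?case by simp
next
  case (Cons x xs)
  let ?W' = "scc_of E W x - {x}"
  show ?case
  proof (cases "xs = []")
    case False
    have "x \<in> W" and rd: "rank_decreasing E ?W' xs" using Cons.prems by auto
    then have "?W' \<noteq> {}" using False arena_subset[of E ?W' xs]
      by (cases xs) auto
    then have "cr E ?W' < cr E (scc_of E W x)" using Cons.prems by simp
    also have "\<dots> \<le> cr E W" using cr_scc_le[OF Cons.prems(1) scc_scc_of[OF \<open>x \<in> W\<close>]] .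
    finally have "cr E ?W' < cr E W" .
    moreover have "length xs \<le> 1 + cr E ?W'"
      using Cons.IH[OF _ rd] Cons.prems(1) by (meson finite_Diff finite_subset scc_of_subset)
    ultimately show ?thesis by simp
  qed simp
qed

lemma sealed_entry_in_arena:
  assumes "sealed E W xs R" "u \<in> R - set xs" "u \<in> W" "(u, d) \<in> E" "d \<in> arena E W xs"
  shows "u \<in> arena E W xs"
  using assms
proof (induction xs arbitrary: W)
  case (Cons x xs)
  have "d \<in> scc_of E W x"
    using Cons.prems(5) arena_subset[of E "scc_of E W x - {x}" xs] by auto
  then have "u \<in> scc_of E W x - {x}" using Cons.prems(1,2,4) by auto
  then show ?case using Cons by simp
qed simp

text \<open>
  On positions not reached by the strategy the word may repeat letters, and then butlast need not
  remove a letter; so the word is cut just before the last first occurrence of a letter.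
\<close>

definition pop_word :: "'a list \<Rightarrow> 'a list" where
  "pop_word X = take ((LEAST n. set (take n X) = set X) - 1) X"

lemma pop_word:
  assumes "X \<noteq> []"
  shows "prefix (pop_word X) X" "card (set X - set (pop_word X)) = 1"
proof -
  define n where "n = (LEAST n. set (take n X) = set X)"
  have n_le: "n \<le> length X" unfolding n_def by (rule Least_le) simp
  have set_take_n: "set (take n X) = set X" unfolding n_def by (rule LeastI[of _ "length X"]) simp
  have "n \<noteq> 0" using set_take_n assms by (metis set_empty take_0)
  have set_take_pred: "set (take (n - 1) X) \<noteq> set X"
  proof
    assume "set (take (n - 1) X) = set X"
    then have "n \<le> n - 1" unfolding n_def by (rule Least_le)
    then show False using \<open>n \<noteq> 0\<close> by simp
  qed
  have pop: "pop_word X = take (n - 1) X" unfolding pop_word_def n_def ..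
  show "prefix (pop_word X) X" unfolding pop by (rule take_is_prefix)
  have "take n X = take (n - 1) X @ [X ! (n - 1)]"
    using \<open>n \<noteq> 0\<close> n_le by (metis Suc_diff_1 Suc_le_lessD not_gr0 take_Suc_conv_app_nth)
  then have "set X = insert (X ! (n - 1)) (set (take (n - 1) X))" using set_take_n by simp
  then have "set X - set (take (n - 1) X) = {X ! (n - 1)}" using set_take_pred by auto
  then show "card (set X - set (pop_word X)) = 1" unfolding pop by simp
qed

lemma pop_word_distinct: "distinct X \<Longrightarrow> pop_word X = butlast X"
proof -
  assume "distinct X"
  have "(LEAST n. set (take n X) = set X) = length X"
  proof (rule Least_equality)
    fix m assume "set (take m X) = set X"
    then have "length (take m X) = length X"
      using \<open>distinct X\<close> by (metis distinct_card distinct_take)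
    then show "length X \<le> m" by simp
  qed simp
  then show ?thesis unfolding pop_word_def by (simp add: butlast_conv_take)
qed

lemma ipos_closed: "ipos V E (X, R) \<Longrightarrow> ind E (V - set X) `` R \<subseteq> R"
  unfolding ipos_def ind_def by auto

lemma isucc_region_subset:
  assumes "isucc V E (X, R) (X', R')" and closed: "ind E (V - (set X \<inter> set X')) `` R \<subseteq> R"
  shows "R' \<subseteq> R"
proof
  fix v' assume "v' \<in> R'"
  then have "v' \<in> (ind E (V - (set X \<inter> set X')))\<^sup>* `` R"
    using assms(1) unfolding isucc_def by auto
  then show "v' \<in> R" using Image_closed_trancl[OF closed] by simp
qed

definition lifo_strategy :: "'a set \<Rightarrow> ('a \<times> 'a) set \<Rightarrow> 'a pos \<Rightarrow> 'a list" where
  "lifo_strategy V E p = (if arena E V (fst p) \<inter> snd p \<noteq> {}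
     then fst p @ [pivot E (arena E V (fst p)) (snd p)]
     else if fst p = [] then [SOME v. v \<in> V] else pop_word (fst p))"

lemma lifo_strategy_cases:
  assumes "ipos V E (X, R)"
  obtains (push) "arena E V X \<inter> R \<noteq> {}" "lifo_strategy V E (X, R) = X @ [pivot E (arena E V X) R]"
  | (start) "X = []" "R = {}" "lifo_strategy V E (X, R) = [SOME v. v \<in> V]"
  | (pop) "X \<noteq> []" "arena E V X \<inter> R = {}" "lifo_strategy V E (X, R) = pop_word X"
  using assms unfolding lifo_strategy_def ipos_def by (cases X) auto

lemma pivot_of_arena:
  assumes "digraph V E" "ipos V E (X, R)" "arena E V X \<inter> R \<noteq> {}"
  shows "pivot E (arena E V X) R \<in> arena E V X \<inter> R"
proof -
  have fin: "finite (arena E V X)"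
    using assms(1) arena_subset[of E V X] unfolding digraph_def by (meson finite_Diff finite_subset)
  have "ind E (arena E V X) `` R \<subseteq> R"
    using ipos_closed[OF assms(2)] ind_mono[OF arena_subset[of E V X]] by blast
  then show ?thesis
    using pivot_in_region pivot_in_scc scc_of_subset fin assms(3) by (metis Int_iff inf_commute subsetD)
qed

lemma lifo_strategy_isucc:
  assumes dg: "digraph V E" and ip: "ipos V E (X, R)"
  shows "isucc V E (X, R) (lifo_strategy V E (X, R), {})"
  using ip
proof (cases rule: lifo_strategy_cases)
  case push
  have "pivot E (arena E V X) R \<in> V - set X"
    using pivot_of_arena[OF dg ip push(1)] ip unfolding ipos_def by auto
  then show ?thesis using push ip unfolding isucc_def ipos_def by (auto simp: insert_Diff_if)
next
  case start
  have "(SOME v. v \<in> V) \<in> V" using dg unfolding digraph_def by (simp add: some_in_eq)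
  then show ?thesis using start unfolding isucc_def ipos_def by simp
next
  case pop
  have "set (pop_word X) \<subseteq> set X" using pop_word(1)[OF pop(1)] by (rule set_mono_prefix)
  then have "(set X - set (pop_word X)) \<union> (set (pop_word X) - set X) = set X - set (pop_word X)"
    by auto
  then show ?thesis using pop pop_word[OF pop(1)] ip \<open>set (pop_word X) \<subseteq> set X\<close>
    unfolding isucc_def ipos_def fst_conv snd_conv by auto
qed

lemma lifo_strategy_istrategy: "digraph V E \<Longrightarrow> istrategy V E (lifo_strategy V E)"
  unfolding istrategy_def using lifo_strategy_isucc by fastforce

lemma sealed_snoc_pivot:
  assumes dg: "digraph V E" and ip: "ipos V E (X, R)" and sl: "sealed E V X R"
    and meets: "arena E V X \<inter> R \<noteq> {}" and R': "R' \<subseteq> R"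
  shows "sealed E V (X @ [pivot E (arena E V X) R]) R'"
proof -
  let ?W = "arena E V X" and ?x = "pivot E (arena E V X) R"
  have finW: "finite ?W"
    using dg arena_subset[of E V X] unfolding digraph_def by (meson finite_Diff finite_subset)
  have meets': "R \<inter> ?W \<noteq> {}" using meets by auto
  have "\<forall>u\<in>R'. \<forall>d\<in>scc_of E ?W ?x. (u, d) \<in> E \<longrightarrow> u \<in> scc_of E ?W ?x"
  proof (intro ballI impI)
    fix u d assume u: "u \<in> R'" and d: "d \<in> scc_of E ?W ?x" and ud: "(u, d) \<in> E"
    have uR: "u \<in> R - set X" and "u \<in> V" using u R' ip unfolding ipos_def by auto
    have dW: "d \<in> ?W" using d scc_of_subset by fast
    have "u \<in> ?W" using sealed_entry_in_arena[OF sl uR \<open>u \<in> V\<close> ud dW] .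
    then have "(u, d) \<in> ind E ?W" using ud dW unfolding ind_def by simp
    moreover have "u \<in> R \<inter> ?W" using uR \<open>u \<in> ?W\<close> by simp
    ultimately show "u \<in> scc_of E ?W ?x" using scc_of_pivot_entry[OF finW meets'] d by blast
  qed
  moreover have "sealed E V X R'" using sealed_mono[OF sl R'] .
  ultimately show ?thesis unfolding sealed_snoc by simp
qed

text \<open>
  Once the robber region is empty the strategy may place an arbitrary searcher, so the
  component-wise conjuncts are only demanded while the region is nonempty.
\<close>

definition stack_inv :: "'a set \<Rightarrow> ('a \<times> 'a) set \<Rightarrow> 'a pos \<Rightarrow> bool" where
  "stack_inv V E p \<longleftrightarrow> ipos V E p \<and> distinct (fst p) \<and> length (fst p) \<le> 1 + cr E V
     \<and> (snd p \<noteq> {} \<longrightarrow> rank_decreasing E V (fst p) \<and> sealed E V (fst p) (snd p))"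

lemma push_step:
  assumes dg: "digraph V E" and inv: "stack_inv V E (X, R)" and meets: "arena E V X \<inter> R \<noteq> {}"
  defines "x \<equiv> pivot E (arena E V X) R"
  assumes succ: "isucc V E (X, R) (X @ [x], R')"
  shows "stack_inv V E (X @ [x], R') \<and> R' \<subseteq> R - {x}"
proof -
  let ?W = "arena E V X"
  have ip: "ipos V E (X, R)" and "distinct X" using inv unfolding stack_inv_def by auto
  have finV: "finite V" using dg unfolding digraph_def by simp
  have "R \<noteq> {}" using meets by auto
  then have rd: "rank_decreasing E V X" and sl: "sealed E V X R"
    using inv unfolding stack_inv_def by auto
  have x: "x \<in> ?W \<inter> R" unfolding x_def using pivot_of_arena[OF dg ip meets] .
  then have "x \<notin> set X" using arena_subset[of E V X] by auto
  have "set X \<inter> set (X @ [x]) = set X" by auto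
  then have "R' \<subseteq> R" using isucc_region_subset[OF succ] ipos_closed[OF ip] by simp
  moreover have ip': "ipos V E (X @ [x], R')" using succ unfolding isucc_def by simp
  then have "x \<notin> R'" unfolding ipos_def by auto
  ultimately have R': "R' \<subseteq> R - {x}" by auto
  have finW: "finite ?W" using finV arena_subset[of E V X] by (meson finite_Diff finite_subset)
  have meets': "R \<inter> ?W \<noteq> {}" using meets by auto
  have "scc_of E ?W x - {x} \<noteq> {} \<longrightarrow> cr E (scc_of E ?W x - {x}) < cr E (scc_of E ?W x)"
    unfolding x_def using cr_scc_of_pivot_Diff_less[OF finW meets'] by blast
  then have rd': "rank_decreasing E V (X @ [x])"
    using rd x unfolding rank_decreasing_snoc arena_snoc by simp
  have "sealed E V (X @ [x]) R'"
    unfolding x_def using sealed_snoc_pivot[OF dg ip sl meets] R' by blast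
  moreover have "distinct (X @ [x])" using \<open>distinct X\<close> \<open>x \<notin> set X\<close> by simp
  moreover have "length (X @ [x]) \<le> 1 + cr E V"
    using length_le_cr_if_rank_decreasing[OF finV rd'] .
  ultimately show ?thesis using ip' rd' R' unfolding stack_inv_def by simp
qed

lemma pop_step:
  assumes inv: "stack_inv V E (xs @ [x], R)" and cleared: "arena E V (xs @ [x]) \<inter> R = {}"
    and succ: "isucc V E (xs @ [x], R) (xs, R')"
  shows "stack_inv V E (xs, R') \<and> R' \<subseteq> R"
proof -
  have ip: "ipos V E (xs @ [x], R)" and dist: "distinct (xs @ [x])"
    and len: "length (xs @ [x]) \<le> 1 + cr E V"
    and rs: "R \<noteq> {} \<Longrightarrow> rank_decreasing E V (xs @ [x]) \<and> sealed E V (xs @ [x]) R"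
    using inv unfolding stack_inv_def by auto
  have no_edge_to_x: "(u, x) \<notin> E" if u: "u \<in> R" for u
  proof
    assume ux: "(u, x) \<in> E"
    let ?C = "scc_of E (arena E V xs) x"
    have "x \<in> arena E V xs" and sl: "\<forall>u\<in>R. \<forall>d\<in>?C. (u, d) \<in> E \<longrightarrow> u \<in> ?C"
      using rs u unfolding rank_decreasing_snoc sealed_snoc by auto
    then have "u \<in> ?C" using self_in_scc_of u ux by metis
    moreover have "u \<noteq> x" using ip u unfolding ipos_def by auto
    ultimately have "u \<in> arena E V (xs @ [x])" unfolding arena_snoc by simp
    then show False using cleared u by blast
  qed
  have "set (xs @ [x]) \<inter> set xs = set (xs @ [x]) - {x}" using dist by auto
  moreover have "ind E (V - (set (xs @ [x]) - {x})) `` R \<subseteq> R"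
  proof
    fix w assume "w \<in> ind E (V - (set (xs @ [x]) - {x})) `` R"
    then obtain u where "u \<in> R" "(u, w) \<in> E" "w \<in> V" "w \<notin> set (xs @ [x]) - {x}"
      unfolding ind_def by blast
    moreover have "w \<noteq> x" using calculation(1,2) no_edge_to_x by blast
    ultimately show "w \<in> R" using ip unfolding ipos_def by simp
  qed
  ultimately have R': "R' \<subseteq> R" using isucc_region_subset[OF succ] by simp
  have "rank_decreasing E V xs \<and> sealed E V xs R'" if "R' \<noteq> {}"
  proof -
    have "rank_decreasing E V (xs @ [x]) \<and> sealed E V (xs @ [x]) R" using rs R' that by blast
    then show ?thesis using sealed_mono[of E V xs R R'] R' unfolding rank_decreasing_snoc sealed_snoc by simp
  qed
  moreover have "ipos V E (xs, R')" using succ unfolding isucc_def by simp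
  ultimately show ?thesis using dist len R' unfolding stack_inv_def by simp
qed

definition search_measure :: "'a set \<Rightarrow> 'a pos \<Rightarrow> nat" where
  "search_measure V p = card (snd p) * (card V + 1) + length (fst p)"

lemma lifo_strategy_step:
  assumes dg: "digraph V E" and inv: "stack_inv V E p" and succ: "isucc V E p p'"
    and move: "fst p' = lifo_strategy V E p"
  shows "stack_inv V E p' \<and> snd p' \<subseteq> snd p
    \<and> (snd p' \<noteq> {} \<longrightarrow> search_measure V p' < search_measure V p)"
proof -
  obtain X R X' R' where p: "p = (X, R)" and p': "p' = (X', R')" by fastforce
  have ip: "ipos V E (X, R)" and "distinct X" using inv unfolding p stack_inv_def by auto
  have finV: "finite V" using dg unfolding digraph_def by simp
  have "R \<subseteq> V" using ip unfolding ipos_def by auto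
  then have finR: "finite R" using finV by (rule finite_subset)
  from ip show ?thesis
  proof (cases rule: lifo_strategy_cases)
    case push
    let ?x = "pivot E (arena E V X) R"
    have X': "X' = X @ [?x]" using push move unfolding p p' by simp
    have inv': "stack_inv V E (X', R')" and R': "R' \<subseteq> R - {?x}"
      using push_step[OF dg inv[unfolded p] push(1)] succ unfolding p p' X' by auto
    have "card R' \<le> card (R - {?x})" using R' finR by (simp add: card_mono)
    also have "\<dots> < card R"
      using finR pivot_of_arena[OF dg ip push(1)] by (meson IntD2 card_Diff1_less)
    finally have "(card R' + 1) * (card V + 1) \<le> card R * (card V + 1)"
      by (intro mult_le_mono1) simp
    moreover have "length X' \<le> card V"
      using inv' finV unfolding stack_inv_def ipos_def p' by (metis card_mono distinct_card fst_conv)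
    ultimately have "search_measure V p' < search_measure V p"
      unfolding search_measure_def p p' by simp
    then show ?thesis using inv' R' unfolding p p' by auto
  next
    case start
    have "R' = {}" using isucc_region_subset[OF succ[unfolded p p']] start by simp
    moreover have "distinct X'" using start move unfolding p p' by simp
    ultimately show ?thesis
      using start move succ unfolding p p' stack_inv_def isucc_def by simp
  next
    case pop
    obtain xs x where X: "X = xs @ [x]" using pop(1) by (metis rev_exhaust)
    have "X' = pop_word X" using pop(3) move unfolding p p' by simp
    also have "\<dots> = xs" using pop_word_distinct[OF \<open>distinct X\<close>] X by simp
    finally have X': "X' = xs" .
    have "stack_inv V E (X', R')" "R' \<subseteq> R"
      using pop_step[OF inv[unfolded p X] pop(2)[unfolded X]] succ unfolding p p' X X' by auto
    moreover have "card R' \<le> card R"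
      using \<open>R' \<subseteq> R\<close> finR by (rule card_mono[rotated])
    then have "card R' * (card V + 1) \<le> card R * (card V + 1)" by (rule mult_le_mono1)
    ultimately show ?thesis unfolding p p' search_measure_def X X' by auto
  qed
qed

context
  fixes V :: "'a set" and E :: "('a \<times> 'a) set" and s :: "nat \<Rightarrow> 'a pos" and len :: enat
  assumes dg: "digraph V E" and search: "cc_search V E (lifo_strategy V E) s len"
begin

lemma stack_inv_search: "enat i < len \<Longrightarrow> stack_inv V E (s i)"
proof (induction i)
  case 0
  then have "s 0 = ([], V)" "ipos V E (s 0)" using search unfolding cc_search_def isearch_def by auto
  then show ?case unfolding stack_inv_def by simp
next
  case (Suc i)
  have "isucc V E (s i) (s (Suc i))" "fst (s (Suc i)) = lifo_strategy V E (s i)"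
    using search Suc.prems unfolding cc_search_def isearch_def consistent_def by auto
  then show ?case
    using lifo_strategy_step[OF dg Suc.IH] Suc.prems Suc_ile_eq order_less_imp_le by blast
qed

lemma search_step:
  assumes "enat (Suc i) < len"
  shows "snd (s (Suc i)) \<subseteq> snd (s i)
    \<and> (snd (s (Suc i)) \<noteq> {} \<longrightarrow> search_measure V (s (Suc i)) < search_measure V (s i))"
proof -
  have "enat i < len" using assms Suc_ile_eq order_less_imp_le by blast
  moreover have "isucc V E (s i) (s (Suc i))" "fst (s (Suc i)) = lifo_strategy V E (s i)"
    using search assms unfolding cc_search_def isearch_def consistent_def by auto
  ultimately show ?thesis using lifo_strategy_step[OF dg stack_inv_search] by blast
qed

lemma search_winning: "winning_search s len"
proof (cases "len = \<infinity>")
  case True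
  show ?thesis
  proof (rule ccontr)
    assume "\<not> winning_search s len"
    then have "(s (Suc k), s k) \<in> measure (search_measure V)" for k
      using search_step True unfolding winning_search_def by simp
    then show False using wf_no_infinite_down_chainE[OF wf_measure] by metis
  qed
next
  case False
  then show ?thesis using search unfolding cc_search_def complete_search_def winning_search_def by auto
qed

end

lemma lifo_strategy_winning:
  assumes "digraph V E"
  shows "mi_winning_strategy V E (1 + cr E V) (lifo_strategy V E)"
  unfolding mi_winning_strategy_def monotone_search_def search_uses_at_most_def
  using assms lifo_strategy_istrategy search_winning search_step stack_inv_search
  unfolding stack_inv_def by blast

theorem lemma3:
  fixes V :: "'a set" and E :: "('a \<times> 'a) set"
  assumes "digraph V E"
  shows "1 + cr E V \<ge> lifo_mi V E"
  unfolding lifo_mi_def by (rule Least_le) (use lifo_strategy_winning[OF assms] in blast)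

end
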